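(* Let $f=\frac1{1-X}\in GF(2)[[X]]$, $\mu[f]:g\mapsto fg$, and let $\Gamma$ be the group of bijections of $GF(2)[[X]]$ generated by the maps $g\mapsto f\cdot(s+g)$, $s\in\{0,1\}$. Then the cyclic subgroup $\langle\mu[f]\rangle$ is not a normal subgroup of $\Gamma$.
   Context: Under the identification of $\{0,1\}^\omega$ with $GF(2)[[X]]$ via $(a_k)\mapsto\sum a_kX^k$, $\Gamma$ is the automaton group $\Gamma(\mathcal{M}_2)$ of the two-state Mealy machine over $\{0,1\}$ in which state $s$, reading $r$, outputs $s+r\bmod 2$ and moves to state $s+r\bmod 2$. *)

theory Defs
  imports "HOL-Library.Z2" "HOL-Computational_Algebra.Formal_Power_Series"
    "HOL-Algebra.Bij" "HOL-Algebra.Coset" "HOL-Algebra.Generated_Groups"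
begin

definition f2 :: "bit fps" where
  "f2 = inverse (1 - fps_X)"

definition mu :: "bit fps \<Rightarrow> bit fps \<Rightarrow> bit fps" where
  "mu f = (\<lambda>g. f * g)"

definition gen_map :: "bit \<Rightarrow> bit fps \<Rightarrow> bit fps" where
  "gen_map s = (\<lambda>g. f2 * (fps_const s + g))"

abbreviation SymGF2 :: "(bit fps \<Rightarrow> bit fps) monoid" where
  "SymGF2 \<equiv> BijGroup (UNIV :: bit fps set)"

definition Gamma :: "(bit fps \<Rightarrow> bit fps) set" where
  "Gamma = generate SymGF2 (range gen_map)"

end

theory Submission
  imports Defs
begin

text \<open>
  Every element of \<open>\<langle>\<mu>[f]\<rangle>\<close> fixes \<open>0\<close>. If this subgroup were normal in \<open>\<Gamma>\<close>, it would
  fix the whole \<open>\<Gamma>\<close>-orbit of \<open>0\<close>, in particular the image \<open>f\<close> of \<open>0\<close> under the generator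
  \<open>g \<mapsto> f(1 + g)\<close>. But \<open>\<mu>[f]\<close> sends \<open>f\<close> to \<open>f\<^sup>2 \<noteq> f\<close>.
\<close>

lemma bij_affine_unit:
  fixes a b c :: "'a::comm_ring_1"
  assumes "a * b = 1"
  shows "bij (\<lambda>x. a * (c + x))"
proof (rule bij_betw_byWitness[where f' = "\<lambda>y. b * y - c"])
  show "\<forall>x\<in>UNIV. b * (a * (c + x)) - c = x"
    using assms by (simp add: mult.assoc[symmetric] mult.commute[of b])
  show "\<forall>y\<in>UNIV. a * (c + (b * y - c)) = y"
    using assms by (simp add: mult.assoc[symmetric])
qed auto

lemma Bij_UNIV_iff: "h \<in> Bij UNIV \<longleftrightarrow> bij h"
  by (simp add: Bij_def)

lemma mult_BijGroup_apply:
  assumes "g \<in> Bij S" "h \<in> Bij S" "x \<in> S"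
  shows "(g \<otimes>\<^bsub>BijGroup S\<^esub> h) x = g (h x)"
  using assms by (simp add: BijGroup_def compose_def)

lemma subgroup_BijGroup_stabilizer:
  assumes "p \<in> S"
  shows "subgroup {h \<in> Bij S. h p = p} (BijGroup S)"
proof (rule group.subgroupI[OF group_BijGroup])
  show "{h \<in> Bij S. h p = p} \<subseteq> carrier (BijGroup S)"
    by (auto simp: BijGroup_def)
  show "{h \<in> Bij S. h p = p} \<noteq> {}"
    using id_Bij[of S] assms by force
next
  fix h assume h: "h \<in> {h \<in> Bij S. h p = p}"
  then have "inv_into S h p = p"
    using assms by (auto simp: Bij_def bij_betw_def intro: inv_into_f_eq)
  then show "inv\<^bsub>BijGroup S\<^esub> h \<in> {h \<in> Bij S. h p = p}"
    using h assms by (simp add: inv_BijGroup restrict_inv_into_Bij)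
next
  fix g h assume "g \<in> {h \<in> Bij S. h p = p}" "h \<in> {h \<in> Bij S. h p = p}"
  then show "g \<otimes>\<^bsub>BijGroup S\<^esub> h \<in> {h \<in> Bij S. h p = p}"
    using assms by (simp add: mult_BijGroup_apply) (simp add: BijGroup_def compose_Bij)
qed

lemma generate_BijGroup_fixes_point:
  assumes "A \<subseteq> Bij S" "p \<in> S" "\<forall>a\<in>A. a p = p" "h \<in> generate (BijGroup S) A"
  shows "h p = p"
  using group.generate_subgroup_incl[OF group_BijGroup _ subgroup_BijGroup_stabilizer[OF assms(2)]]
    assms by blast

lemma normal_fixing_point_fixes_orbit:
  assumes normal: "N \<lhd> BijGroup S\<lparr>carrier := T\<rparr>" and "T \<subseteq> Bij S"
    and fixes_p: "\<forall>k\<in>N. k p = p" and "p \<in> S" "g \<in> T" "h \<in> N"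
  shows "h (g p) = g p"
proof -
  let ?G = "BijGroup S\<lparr>carrier := T\<rparr>"
  interpret normal N ?G by (fact normal)
  define k where "k = inv\<^bsub>?G\<^esub> g \<otimes>\<^bsub>?G\<^esub> h \<otimes>\<^bsub>?G\<^esub> g"
  have "k \<in> N"
    unfolding k_def using inv_op_closed1 \<open>g \<in> T\<close> \<open>h \<in> N\<close> by simp
  have "h \<in> T" "k \<in> T"
    using subset \<open>h \<in> N\<close> \<open>k \<in> N\<close> by auto
  have "g \<in> carrier ?G" "h \<in> carrier ?G"
    using \<open>g \<in> T\<close> \<open>h \<in> T\<close> by simp_all
  then have "g \<otimes>\<^bsub>?G\<^esub> k = h \<otimes>\<^bsub>?G\<^esub> g"
    unfolding k_def by (simp only: m_assoc[symmetric] m_closed inv_closed r_inv l_one)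
  then have "(g \<otimes>\<^bsub>BijGroup S\<^esub> k) p = (h \<otimes>\<^bsub>BijGroup S\<^esub> g) p"
    by simp
  moreover have "g \<in> Bij S" "h \<in> Bij S" "k \<in> Bij S"
    using \<open>T \<subseteq> Bij S\<close> \<open>g \<in> T\<close> \<open>h \<in> T\<close> \<open>k \<in> T\<close> by auto
  ultimately have "g (k p) = h (g p)"
    using \<open>p \<in> S\<close> by (simp add: mult_BijGroup_apply)
  moreover have "k p = p"
    using fixes_p \<open>k \<in> N\<close> by blast
  ultimately show ?thesis
    by simp
qed

lemma f2_mult_one_minus_X: "f2 * (1 - fps_X) = 1"
  unfolding f2_def by (rule inverse_mult_eq_1) simp

lemma gen_map_Bij: "gen_map s \<in> Bij UNIV"
  using bij_affine_unit[OF f2_mult_one_minus_X]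
  by (simp add: Bij_UNIV_iff gen_map_def)

lemma Gamma_subset_Bij: "Gamma \<subseteq> Bij UNIV"
  using group.generate_incl[OF group_BijGroup, of "range gen_map" UNIV] gen_map_Bij
  unfolding Gamma_def by (auto simp: BijGroup_def)

lemma f2_square_neq: "f2 * f2 \<noteq> f2"
proof
  assume "f2 * f2 = f2"
  then have "f2 * (f2 * (1 - fps_X)) = f2 * (1 - fps_X)"
    by (simp add: mult.assoc[symmetric])
  then have "f2 = 1"
    by (simp add: f2_mult_one_minus_X)
  then show False
    using f2_mult_one_minus_X by simp
qed

theorem proposition9p6:
  shows "\<not> (generate SymGF2 {mu f2} \<lhd> SymGF2\<lparr>carrier := Gamma\<rparr>)"
proof
  assume normal: "generate SymGF2 {mu f2} \<lhd> SymGF2\<lparr>carrier := Gamma\<rparr>"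
  have "mu f2 \<in> Bij UNIV"
    using gen_map_Bij[of 0] by (simp add: mu_def gen_map_def)
  moreover have "mu f2 0 = 0"
    by (simp add: mu_def)
  ultimately have fixes_0: "\<forall>h \<in> generate SymGF2 {mu f2}. h 0 = 0"
    using generate_BijGroup_fixes_point[of "{mu f2}" UNIV 0] by blast
  have "gen_map 1 \<in> Gamma"
    unfolding Gamma_def by (rule generate.incl) simp
  moreover have "mu f2 \<in> generate SymGF2 {mu f2}"
    by (rule generate.incl) simp
  ultimately have "mu f2 (gen_map 1 0) = gen_map 1 0"
    using normal_fixing_point_fixes_orbit[OF normal Gamma_subset_Bij fixes_0] by blast
  then show False
    using f2_square_neq by (simp add: mu_def gen_map_def)
qed

end
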